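(* Let $G=(V,E)$ be a graph with $n$ vertices, $m$ edges and maximum degree $\Delta$, and let $c>0$ be the constant determining the threshold $\tau=(c+1)\log n$. The randomized variant of Procedure Edge-Coloring with parameter $h$ satisfying $\log\left(\Delta\cdot\frac{\log\log n}{4\log n}\right)\le h\le\log\Delta-2$ computes a proper $(\Delta+3\cdot2^h)$-edge-coloring of $G$ in $O\left(m\left(\frac{\Delta}{2^h}\right)^{18}+m\cdot h\right)$ time with probability at least $1-\frac{1}{n^c}$.
   Context: Logarithms are base 2. A proper $k$-edge-coloring is a map $\varphi:E\to\{1,\dots,k\}$ with distinct colors on distinct edges sharing an endpoint. A degree-splitting of $H$ with discrepancy $\kappa$ is a partition $(E_1,E_2)$ of $E(H)$ with $|\deg_{E_1}(v)-\deg_{E_2}(v)|\le\kappa$ for all $v$. Procedure Edge-Coloring$(H,h)$: if $h=0$, return a $(\Delta(H)+1)$-edge-coloring of $H$ with palette $\{1,\dots,\Delta(H)+1\}$ computed by a base-case subroutine. Otherwise compute in $O(|E(H)|)$ time a degree-splitting $(E_1,E_2)$ of $H$ with discrepancy at most 2 and $\{|E_1|,|E_2|\}=\{\lfloor |E(H)|/2\rfloor,\lceil |E(H)|/2\rceil\}$; let $H_1=(V(H),E_1)$, $H_2=(V(H),E_2)$ with isolated vertices discarded; compute $\varphi_1=$ Edge-Coloring$(H_1,h-1)$, $\varphi_2=$ Edge-Coloring$(H_2,h-1)$; return $\varphi=\varphi_1$ on $E_1$ and $\varphi=p_1+\varphi_2$ on $E_2$, where $p_1$ is the palette size of $\varphi_1$.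 Randomized variant: in the base case, for an input with $n'$ vertices, $m'$ edges and maximum degree $\Delta'$, if $n'\ge\tau$ a randomized algorithm is used that outputs a proper $(\Delta'+1)$-edge-coloring in $O(\Delta'^{18}n')$ time with probability at least $1-\Delta'^{-n'}$; otherwise a deterministic algorithm is used that outputs a proper $(\Delta'+1)$-edge-coloring in $O(m'\Delta'\log n')$ time. *)

theory Defs
  imports "HOL-Probability.Probability_Mass_Function"
begin

section \<open>Graphs (given by their edge sets; vertices = non-isolated vertices)\<close>

definition is_graph :: "'a set set \<Rightarrow> bool" where
  "is_graph E \<longleftrightarrow> finite E \<and> (\<forall>e\<in>E. card e = 2)"

definition verts :: "'a set set \<Rightarrow> 'a set" where
  "verts E = \<Union>E"

definition deg :: "'a set set \<Rightarrow> 'a \<Rightarrow> nat" where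
  "deg E v = card {e\<in>E. v \<in> e}"

definition maxdeg :: "'a set set \<Rightarrow> nat" where
  "maxdeg E = Max (insert 0 (deg E ` verts E))"

definition proper_edge_coloring :: "'a set set \<Rightarrow> nat \<Rightarrow> ('a set \<Rightarrow> nat) \<Rightarrow> bool" where
  "proper_edge_coloring E k \<phi> \<longleftrightarrow>
     (\<forall>e\<in>E. \<phi> e \<in> {1..k}) \<and>
     (\<forall>e\<in>E. \<forall>e'\<in>E. e \<noteq> e' \<and> e \<inter> e' \<noteq> {} \<longrightarrow> \<phi> e \<noteq> \<phi> e')"

definition degree_splitting :: "'a set set \<Rightarrow> 'a set set \<Rightarrow> 'a set set \<Rightarrow> nat \<Rightarrow> bool" where
  "degree_splitting E E1 E2 \<kappa> \<longleftrightarrow>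
     E1 \<union> E2 = E \<and> E1 \<inter> E2 = {} \<and>
     (\<forall>v. \<bar>int (deg E1 v) - int (deg E2 v)\<bar> \<le> int \<kappa>)"

text \<open>
  Subroutines (abstract):
   S: splitting subroutine, returns (E1, E2, running time);
   R: randomized base algorithm, a distribution over (coloring, running time);
   D: deterministic base algorithm, returns (coloring, running time).
  tau is the threshold. The procedure returns a distribution over
  (coloring, palette size, total running time).  The running time of a
  recursive call is the splitting time plus |E(H)| for building the
  subgraphs / combining, plus the times of the two recursive calls.\<close>

fun edge_coloring ::
  "('a set set \<Rightarrow> 'a set set \<times> 'a set set \<times> nat)
   \<Rightarrow> ('a set set \<Rightarrow> (('a set \<Rightarrow> nat) \<times> nat) pmf)
   \<Rightarrow> ('a set set \<Rightarrow> ('a set \<Rightarrow> nat) \<times> nat)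
   \<Rightarrow> real \<Rightarrow> 'a set set \<Rightarrow> nat \<Rightarrow> (('a set \<Rightarrow> nat) \<times> nat \<times> nat) pmf" where
  "edge_coloring S R D \<tau> H 0 =
     (if \<tau> \<le> real (card (verts H))
      then map_pmf (\<lambda>(\<phi>, t). (\<phi>, maxdeg H + 1, t)) (R H)
      else return_pmf (case D H of (\<phi>, t) \<Rightarrow> (\<phi>, maxdeg H + 1, t)))"
| "edge_coloring S R D \<tau> H (Suc h) =
     (case S H of (E1, E2, t0) \<Rightarrow>
        bind_pmf (edge_coloring S R D \<tau> E1 h) (\<lambda>(\<phi>1, p1, t1).
        bind_pmf (edge_coloring S R D \<tau> E2 h) (\<lambda>(\<phi>2, p2, t2).
        return_pmf (\<lambda>e. if e \<in> E1 then \<phi>1 e else p1 + \<phi>2 e,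
                    p1 + p2, t0 + card H + t1 + t2))))"

end

theory Submission
  imports Defs "HOL-Probability.Product_PMF"
begin

(* Each degree splitting halves all degrees up to an additive error of 1, so along the recursion
   the maximum degree moves from d to at most (d + 2)/2 and at least (d - 2)/2, and the number of
   edges from m to at least (m - 1)/2.  After h levels the 2^h leaves have maximum degree between 2
   and about Delta/2^h + 2, and the palettes add up to at most Delta + 3 * 2^h.  A randomized leaf
   with n' >= tau vertices fails with probability at most 2^-n' <= 2^-tau = n^-(c+1), and the
   failure probabilities of the 2^h <= n leaves add up.  Splitting costs O(m) per level; a leaf
   costs O(d^18) per edge when randomized and O(d log tau) per edge when deterministic.  The
   deterministic algorithm only runs when the leaves have fewer than tau^2 edges, so m < 2^h tau^2,
   which bounds (log tau)^2 by h plus a constant, and d log tau <= d^2 + (log tau)^2. *)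

lemma finite_verts: "is_graph E \<Longrightarrow> finite (verts E)"
  unfolding is_graph_def verts_def by (metis card.infinite finite_Union zero_neq_numeral)

lemma deg_eq_0_if_notin_verts: "v \<notin> verts E \<Longrightarrow> deg E v = 0"
  unfolding deg_def verts_def by (metis (mono_tags, lifting) Collect_empty_eq UnionI card.empty)

lemma deg_le_maxdeg: "is_graph E \<Longrightarrow> deg E v \<le> maxdeg E"
  by (cases "v \<in> verts E") (auto simp: maxdeg_def finite_verts deg_eq_0_if_notin_verts)

lemma maxdeg_attained:
  assumes "is_graph E"
  obtains v where "deg E v = maxdeg E"
proof (cases "verts E = {}")
  case True
  then show ?thesis using that by (simp add: maxdeg_def deg_eq_0_if_notin_verts)
next
  case False
  then have "maxdeg E \<in> deg E ` verts E"
    unfolding maxdeg_def using assms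
    by (metis Max_in Max_insert finite_imageI finite_verts image_is_empty max_0L zero_le)
  then show ?thesis using that by force
qed

lemma deg_Un_disjoint:
  assumes "finite E1" "finite E2" "E1 \<inter> E2 = {}"
  shows "deg (E1 \<union> E2) v = deg E1 v + deg E2 v"
proof -
  have "{e \<in> E1 \<union> E2. v \<in> e} = {e \<in> E1. v \<in> e} \<union> {e \<in> E2. v \<in> e}" by auto
  then show ?thesis unfolding deg_def using assms by (simp add: card_Un_disjoint disjoint_iff)
qed

lemma is_graph_subset: "is_graph H \<Longrightarrow> E \<subseteq> H \<Longrightarrow> is_graph E"
  unfolding is_graph_def by (auto intro: finite_subset)

lemma card_verts_le: "is_graph E \<Longrightarrow> card (verts E) \<le> 2 * card E"
proof -
  assume E: "is_graph E"
  have "card (verts E) \<le> (\<Sum>e\<in>E. card e)" unfolding verts_def by (rule card_Union_le_sum_card)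
  also have "\<dots> = 2 * card E" using E unfolding is_graph_def by simp
  finally show ?thesis .
qed

lemma edge_other_endpointE:
  assumes "is_graph E" "e \<in> E" "v \<in> e"
  obtains w where "w \<in> verts E" "e = {v, w}"
proof -
  obtain a b where e: "e = {a, b}" using assms(1,2) unfolding is_graph_def by (meson card_2_iff)
  then have "e = {v, if v = a then b else a}" using assms(3) by auto
  moreover have "(if v = a then b else a) \<in> verts E" using assms(2) e unfolding verts_def by auto
  ultimately show ?thesis using that by blast
qed

lemma card_le_card_verts_squared: "is_graph E \<Longrightarrow> card E \<le> card (verts E) ^ 2"
proof -
  assume E: "is_graph E"
  have "E \<subseteq> (\<lambda>(v, w). {v, w}) ` (verts E \<times> verts E)"
  proof
    fix e assume e: "e \<in> E"
    then obtain v where "v \<in> e" using E unfolding is_graph_def by fastforce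
    with e show "e \<in> (\<lambda>(v, w). {v, w}) ` (verts E \<times> verts E)"
      using E by (auto elim!: edge_other_endpointE simp: verts_def)
  qed
  then have "card E \<le> card (verts E \<times> verts E)"
    using E by (meson card_image_le card_mono finite_SigmaI finite_imageI finite_verts order_trans)
  then show ?thesis by (simp add: power2_eq_square card_cartesian_product)
qed

lemma deg_le_card_verts: "is_graph E \<Longrightarrow> deg E v \<le> card (verts E)"
proof -
  assume E: "is_graph E"
  have "{e \<in> E. v \<in> e} \<subseteq> (\<lambda>w. {v, w}) ` verts E"
    using E by (auto elim!: edge_other_endpointE)
  then have "deg E v \<le> card ((\<lambda>w. {v, w}) ` verts E)"
    unfolding deg_def using E by (intro card_mono) (auto simp: finite_verts)
  also have "\<dots> \<le> card (verts E)" by (rule card_image_le) (simp add: E finite_verts)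
  finally show ?thesis .
qed

lemma maxdeg_le_card_verts: "is_graph E \<Longrightarrow> maxdeg E \<le> card (verts E)"
  by (metis maxdeg_attained deg_le_card_verts)

lemma proper_edge_coloring_mono:
  "proper_edge_coloring E k \<phi> \<Longrightarrow> k \<le> k' \<Longrightarrow> proper_edge_coloring E k' \<phi>"
  unfolding proper_edge_coloring_def by auto

lemma proper_edge_coloring_Un:
  assumes "proper_edge_coloring E1 p1 \<phi>1" "proper_edge_coloring E2 p2 \<phi>2"
  shows "proper_edge_coloring (E1 \<union> E2) (p1 + p2) (\<lambda>e. if e \<in> E1 then \<phi>1 e else p1 + \<phi>2 e)"
proof -
  let ?\<phi> = "\<lambda>e. if e \<in> E1 then \<phi>1 e else p1 + \<phi>2 e"
  have range1: "\<phi>1 e \<in> {1..p1}" if "e \<in> E1" for e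
    using assms(1) that unfolding proper_edge_coloring_def by blast
  have range2: "\<phi>2 e \<in> {1..p2}" if "e \<in> E2" for e
    using assms(2) that unfolding proper_edge_coloring_def by blast
  have "?\<phi> e \<noteq> ?\<phi> e'" if "e \<in> E1 \<union> E2" "e' \<in> E1 \<union> E2" "e \<noteq> e'" "e \<inter> e' \<noteq> {}" for e e'
  proof (cases "e \<in> E1"; cases "e' \<in> E1")
    assume "e \<in> E1" "e' \<in> E1"
    then show ?thesis using assms(1) that unfolding proper_edge_coloring_def by simp
  next
    assume "e \<notin> E1" "e' \<notin> E1"
    then show ?thesis using assms(2) that unfolding proper_edge_coloring_def by simp
  qed (use that range1 range2 in force)+
  moreover have "?\<phi> e \<in> {1..p1 + p2}" if "e \<in> E1 \<union> E2" for e
    using that range1[of e] range2[of e] by auto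
  ultimately show ?thesis unfolding proper_edge_coloring_def by blast
qed

lemma degree_splitting_commute: "degree_splitting H E1 E2 \<kappa> \<Longrightarrow> degree_splitting H E2 E1 \<kappa>"
  unfolding degree_splitting_def by (auto simp: abs_minus_commute)

lemma deg_degree_splitting:
  assumes "finite H" "degree_splitting H E1 E2 \<kappa>"
  shows "real (deg E1 v) \<le> (real (deg H v) + \<kappa>) / 2"
    and "(real (deg H v) - \<kappa>) / 2 \<le> real (deg E1 v)"
proof -
  have "H = E1 \<union> E2" "E1 \<inter> E2 = {}" and discr: "\<bar>int (deg E1 v) - int (deg E2 v)\<bar> \<le> int \<kappa>"
    using assms(2) unfolding degree_splitting_def by auto
  then have sum: "real (deg H v) = real (deg E1 v) + real (deg E2 v)"
    using assms(1) by (simp add: deg_Un_disjoint)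
  have "deg E1 v \<le> deg E2 v + \<kappa>" "deg E2 v \<le> deg E1 v + \<kappa>" using discr by arith+
  then have "real (deg E1 v) \<le> real (deg E2 v) + \<kappa>" "real (deg E2 v) \<le> real (deg E1 v) + \<kappa>"
    by (metis of_nat_add of_nat_le_iff)+
  with sum show "real (deg E1 v) \<le> (real (deg H v) + \<kappa>) / 2"
    and "(real (deg H v) - \<kappa>) / 2 \<le> real (deg E1 v)"
    by (simp_all add: field_simps)
qed

lemma maxdeg_degree_splitting:
  assumes H: "is_graph H" and split: "degree_splitting H E1 E2 \<kappa>"
  shows "real (maxdeg E1) \<le> (real (maxdeg H) + \<kappa>) / 2"
    and "(real (maxdeg H) - \<kappa>) / 2 \<le> real (maxdeg E1)"
proof -
  have fin: "finite H" using H unfolding is_graph_def by simp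
  have E1: "is_graph E1"
    using H split unfolding degree_splitting_def by (auto intro: is_graph_subset)
  obtain w where w: "deg E1 w = maxdeg E1" using maxdeg_attained[OF E1] .
  show "real (maxdeg E1) \<le> (real (maxdeg H) + \<kappa>) / 2"
    using deg_degree_splitting(1)[OF fin split, of w] deg_le_maxdeg[OF H, of w] w by simp
  obtain v where v: "deg H v = maxdeg H" using maxdeg_attained[OF H] .
  show "(real (maxdeg H) - \<kappa>) / 2 \<le> real (maxdeg E1)"
    using deg_degree_splitting(2)[OF fin split, of v] deg_le_maxdeg[OF E1, of v] v by simp
qed

lemma degree_splitting_half_bounds:
  fixes L M Sz :: real
  assumes H: "is_graph H" and split: "degree_splitting H E E' 2" and card_E: "card H div 2 \<le> card E"
    and "L \<le> maxdeg H" "maxdeg H \<le> M" "Sz \<le> card H"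
  shows "is_graph E" "(L - 2) / 2 \<le> maxdeg E" "maxdeg E \<le> (M + 2) / 2" "(Sz - 1) / 2 \<le> card E"
proof -
  show "is_graph E" using H split unfolding degree_splitting_def by (auto intro: is_graph_subset)
  show "(L - 2) / 2 \<le> maxdeg E" "maxdeg E \<le> (M + 2) / 2"
    using maxdeg_degree_splitting[OF H split] assms(4,5) by (simp_all add: field_simps)
  have "card H \<le> 2 * card E + 1" using card_E by linarith
  then have "real (card H) \<le> 2 * card E + 1" by linarith
  then show "(Sz - 1) / 2 \<le> card E" using assms(6) by (simp add: field_simps)
qed

lemma prob_map_pmf_ge:
  assumes "\<And>x. x \<in> A \<Longrightarrow> x \<in> set_pmf X \<Longrightarrow> f x \<in> B"
  shows "measure_pmf.prob X A \<le> measure_pmf.prob (map_pmf f X) B"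
proof -
  have "measure_pmf.prob X A = measure_pmf.prob X (A \<inter> set_pmf X)"
    by (simp add: measure_Int_set_pmf)
  also have "\<dots> \<le> measure_pmf.prob X (f -` B)"
    using assms by (intro measure_pmf.finite_measure_mono) auto
  finally show ?thesis by simp
qed

lemma prob_map_pair_pmf_ge:
  assumes "\<And>x y. x \<in> A \<Longrightarrow> y \<in> B \<Longrightarrow> f (x, y) \<in> Z"
  shows "measure_pmf.prob X A + measure_pmf.prob Y B - 1
           \<le> measure_pmf.prob (map_pmf f (pair_pmf X Y)) Z"
proof -
  let ?a = "measure_pmf.prob X A" and ?b = "measure_pmf.prob Y B"
  have "?a + ?b - 1 \<le> ?a * ?b"
    using mult_nonneg_nonneg[of "1 - ?a" "1 - ?b"] by (simp add: algebra_simps)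
  also have "\<dots> = measure_pmf.prob X (A \<inter> set_pmf X) * measure_pmf.prob Y (B \<inter> set_pmf Y)"
    by (simp add: measure_Int_set_pmf)
  also have "\<dots> = measure_pmf.prob (pair_pmf X Y) ((A \<inter> set_pmf X) \<times> (B \<inter> set_pmf Y))"
    by (rule measure_pmf_prob_product[symmetric]) (auto intro: countable_subset)
  also have "\<dots> \<le> measure_pmf.prob (pair_pmf X Y) (f -` Z)"
    using assms by (intro measure_pmf.finite_measure_mono) auto
  finally show ?thesis by simp
qed

lemma edge_coloring_Suc_eq:
  assumes "S H = (E1, E2, t0)"
  shows "edge_coloring S R D \<tau> H (Suc h) =
    map_pmf (\<lambda>((\<phi>1, p1, t1), (\<phi>2, p2, t2)).
               (\<lambda>e. if e \<in> E1 then \<phi>1 e else p1 + \<phi>2 e, p1 + p2, t0 + card H + t1 + t2))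
      (pair_pmf (edge_coloring S R D \<tau> E1 h) (edge_coloring S R D \<tau> E2 h))"
  unfolding pair_pmf_def map_bind_pmf map_return_pmf
  by (simp add: assms split_beta' cong: if_cong)

definition good_outcome :: "'a set set \<Rightarrow> real \<Rightarrow> real \<Rightarrow> (('a set \<Rightarrow> nat) \<times> nat \<times> nat) set" where
  "good_outcome H P T = {(\<phi>, p, t). proper_edge_coloring H p \<phi> \<and> real p \<le> P \<and> real t \<le> T}"

lemma good_outcome_Un:
  assumes "(\<phi>1, p1, t1) \<in> good_outcome E1 P1 T1" "(\<phi>2, p2, t2) \<in> good_outcome E2 P2 T2"
  shows "(\<lambda>e. if e \<in> E1 then \<phi>1 e else p1 + \<phi>2 e, p1 + p2, t0 + t1 + t2)
           \<in> good_outcome (E1 \<union> E2) (P1 + P2) (real t0 + T1 + T2)"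
  using assms proper_edge_coloring_Un[of E1 p1 \<phi>1 E2 p2 \<phi>2] unfolding good_outcome_def by auto

lemma good_outcome_subset_proper:
  "P \<le> real k \<Longrightarrow> T \<le> T' \<Longrightarrow>
     good_outcome H P T \<subseteq> {(\<phi>, p, t). proper_edge_coloring H k \<phi> \<and> real t \<le> T'}"
  unfolding good_outcome_def by (auto intro: proper_edge_coloring_mono)

lemma good_outcome_mono: "P \<le> P' \<Longrightarrow> T \<le> T' \<Longrightarrow> good_outcome H P T \<subseteq> good_outcome H P' T'"
  unfolding good_outcome_def by auto

(* After h levels of splitting, halve_toward a x h bounds the maximum degree from above (a = 2)
   and from below (a = -2), and the number of edges from below (a = -1). *)
definition halve_toward :: "real \<Rightarrow> real \<Rightarrow> nat \<Rightarrow> real" where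
  "halve_toward a x h = a + (x - a) / 2 ^ h"

lemma halve_toward_0 [simp]: "halve_toward a x 0 = x"
  by (simp add: halve_toward_def)

lemma halve_toward_Suc: "halve_toward a ((x + a) / 2) h = halve_toward a x (Suc h)"
  by (simp add: halve_toward_def field_simps)

(* Cost per edge of the base case on a graph with maximum degree at most d and at least s edges.
   The randomized algorithm costs C d^18 n <= 2 C d^18 m; the deterministic one runs only when
   n < tau, so that m <= n^2 < tau^2 and its cost C m d log n is at most C m d log tau. *)
definition leaf_cost :: "real \<Rightarrow> real \<Rightarrow> real \<Rightarrow> real \<Rightarrow> real" where
  "leaf_cost C \<tau> d s = 2 * C * d ^ 18 + (if s < \<tau>\<^sup>2 then C * d * max 0 (log 2 \<tau>) else 0)"

lemma cube_le_two_powr: "0 \<le> u \<Longrightarrow> (u * ln 2 / 3) ^ 3 \<le> 2 powr (u :: real)"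
proof -
  assume u: "0 \<le> u"
  have "u * ln 2 / 3 \<le> exp (u * ln 2 / 3)" using exp_ge_add_one_self[of "u * ln 2 / 3"] by linarith
  then have "(u * ln 2 / 3) ^ 3 \<le> exp (u * ln 2 / 3) ^ 3" using u by (intro power_mono) auto
  also have "\<dots> = 2 powr u" by (simp add: powr_def flip: exp_of_nat_mult)
  finally show ?thesis .
qed

definition log_tau_const :: "real \<Rightarrow> real" where
  "log_tau_const c = (5 * (c + 1) / (ln 2 / 3) ^ 3) ^ 2"

lemma square_le_of_two_powr_le:
  fixes u c h :: real
  assumes u: "1 \<le> u" and c: "0 \<le> c" and h: "0 \<le> h" and pw: "2 powr u \<le> (c + 1) * (h + 2 + 2 * u)"
  shows "u\<^sup>2 \<le> h + log_tau_const c"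
proof (cases "u \<le> 5 * (c + 1) / (ln 2 / 3) ^ 3")
  case True
  then have "u\<^sup>2 \<le> log_tau_const c" unfolding log_tau_const_def using u by (intro power_mono) auto
  then show ?thesis using h by linarith
next
  case False
  then have "5 * (c + 1) < u * (ln 2 / 3) ^ 3" by (simp add: field_simps)
  from mult_strict_right_mono[OF this, of "u\<^sup>2"]
  have "(c + 1) * (5 * u\<^sup>2) < u * (ln 2 / 3) ^ 3 * u\<^sup>2" using u by (simp add: algebra_simps)
  also have "\<dots> = (u * ln 2 / 3) ^ 3" by (simp add: power2_eq_square power3_eq_cube)
  also have "\<dots> \<le> (c + 1) * (h + 2 + 2 * u)" using cube_le_two_powr[of u] u pw by linarith
  finally have "5 * u\<^sup>2 < h + 2 + 2 * u" using c by (simp add: mult_less_cancel_left_pos)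
  moreover have "u \<le> u\<^sup>2" using mult_left_mono[OF u, of u] u by (simp add: power2_eq_square)
  then have "2 + 2 * u \<le> 4 * u\<^sup>2" using u by linarith
  moreover have "0 \<le> log_tau_const c" unfolding log_tau_const_def by simp
  ultimately show ?thesis by linarith
qed

lemma log2_four: "log 2 4 = (2 :: real)"
  using log_pow_cancel[of "2 :: real" 2] by simp

lemma two_le_log2_tau:
  fixes c n :: real
  assumes "0 \<le> c" "4 \<le> n"
  shows "2 \<le> (c + 1) * log 2 n"
proof -
  have "2 \<le> log 2 n" using log_le_cancel_iff[of 2 4 n] assms(2) by (simp add: log2_four)
  then show ?thesis using mult_mono[of 1 "c + 1" 2 "log 2 n"] assms(1) by simp
qed

lemma log_tau_squared_le:
  fixes c n m :: real
  assumes c: "0 \<le> c" and n: "4 \<le> n" and nm: "n \<le> 2 * m"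
    and small: "halve_toward (-1) m h < ((c + 1) * log 2 n)\<^sup>2"
  shows "(log 2 ((c + 1) * log 2 n))\<^sup>2 \<le> h + log_tau_const c"
proof -
  define \<tau> where "\<tau> = (c + 1) * log 2 n"
  define u where "u = log 2 \<tau>"
  have \<tau>: "2 \<le> \<tau>" unfolding \<tau>_def using c n by (rule two_le_log2_tau)
  have "m + 1 < 2 ^ h * \<tau>\<^sup>2 + 2 ^ h"
    using small unfolding \<tau>_def halve_toward_def by (simp add: field_simps)
  moreover have "2 ^ h \<le> 2 ^ h * \<tau>\<^sup>2"
    using \<tau> mult_left_mono[of 1 "\<tau>\<^sup>2" "2 ^ h"] by (simp add: one_le_power)
  ultimately have "n < 2 ^ h * \<tau>\<^sup>2 * 4" using nm by linarith
  then have "log 2 n < log 2 (2 ^ h * \<tau>\<^sup>2 * 2 ^ 2)"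
    using n \<tau> by (subst log_less_cancel_iff) auto
  also have "\<dots> = h + 2 + 2 * u"
    unfolding u_def using \<tau> by (simp add: log_mult log_nat_power log2_four)
  finally have "2 powr u \<le> (c + 1) * (h + 2 + 2 * u)"
    unfolding u_def using \<tau> c by (simp add: \<tau>_def mult_left_mono)
  moreover have "1 \<le> u" unfolding u_def using \<tau> by simp
  ultimately show ?thesis
    unfolding u_def \<tau>_def using c by (intro square_le_of_two_powr_le) (auto simp: add_ac)
qed

lemma halve_toward_2_bounds:
  fixes \<Delta> :: real
  assumes "4 * 2 ^ h \<le> \<Delta>"
  shows "0 \<le> halve_toward 2 \<Delta> h" "halve_toward 2 \<Delta> h \<le> 3/2 * (\<Delta> / 2 ^ h)"
proof -
  have "(1 :: real) \<le> 2 ^ h" by simp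
  then have "2 \<le> \<Delta>" using assms by linarith
  then have "0 \<le> (\<Delta> - 2) / 2 ^ h" by simp
  moreover have "(\<Delta> - 2) / 2 ^ h \<le> \<Delta> / 2 ^ h" by (intro divide_right_mono) auto
  moreover have "4 \<le> \<Delta> / 2 ^ h" using assms by (simp add: field_simps)
  ultimately show "0 \<le> halve_toward 2 \<Delta> h" "halve_toward 2 \<Delta> h \<le> 3/2 * (\<Delta> / 2 ^ h)"
    unfolding halve_toward_def by linarith+
qed

lemma leaf_cost_le:
  fixes Cp c \<Delta> n m :: real
  assumes Cp: "0 \<le> Cp" and c: "0 \<le> c" and \<Delta>: "4 * 2 ^ h \<le> \<Delta>"
    and nm: "n \<le> 2 * m" and n: "4 \<le> n"
  shows "leaf_cost Cp ((c + 1) * log 2 n) (halve_toward 2 \<Delta> h) (halve_toward (-1) m h)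
           \<le> Cp * (2 * (3/2) ^ 18 + 3/2 * (1 + log_tau_const c)) * (\<Delta> / 2 ^ h) ^ 18
              + 3/2 * Cp * h"
proof -
  define x where "x = \<Delta> / 2 ^ h"
  define d where "d = halve_toward 2 \<Delta> h"
  define \<tau> where "\<tau> = (c + 1) * log 2 n"
  have x: "4 \<le> x" unfolding x_def using \<Delta> by (simp add: field_simps)
  have d: "0 \<le> d" "d \<le> 3/2 * x" unfolding d_def x_def using halve_toward_2_bounds[OF \<Delta>] .
  have x18: "1 \<le> x ^ 18" "x\<^sup>2 \<le> x ^ 18" using x by (auto simp: one_le_power intro: power_increasing)
  have B: "0 \<le> log_tau_const c" unfolding log_tau_const_def by simp
  have "d ^ 18 \<le> (3/2) ^ 18 * x ^ 18"
    using power_mono[OF d(2) d(1), of 18] unfolding power_mult_distrib .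
  then have randomized: "2 * Cp * d ^ 18 \<le> 2 * Cp * ((3/2) ^ 18 * x ^ 18)"
    using Cp by (intro mult_left_mono) auto
  have deterministic: "(if halve_toward (-1) m h < \<tau>\<^sup>2 then Cp * d * max 0 (log 2 \<tau>) else 0)
                       \<le> Cp * (3/2 * (1 + log_tau_const c)) * x ^ 18 + 3/2 * Cp * h"
  proof (cases "halve_toward (-1) m h < \<tau>\<^sup>2")
    case True
    define u where "u = log 2 \<tau>"
    have u: "1 \<le> u" unfolding u_def \<tau>_def using two_le_log2_tau[OF c n] by simp
    have "u\<^sup>2 \<le> h + log_tau_const c"
      unfolding u_def \<tau>_def by (rule log_tau_squared_le[OF c n nm True[unfolded \<tau>_def]])
    then have "x * u \<le> (1 + log_tau_const c) * x ^ 18 + h"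
      using sum_squares_bound[of x u] x18 B mult_left_mono[OF x18(1) B] by (simp add: algebra_simps)
    moreover have "d * u \<le> 3/2 * x * u" using d u by (intro mult_right_mono) auto
    ultimately have "d * u \<le> 3/2 * ((1 + log_tau_const c) * x ^ 18) + 3/2 * h" by linarith
    then have "Cp * (d * u) \<le> Cp * (3/2 * ((1 + log_tau_const c) * x ^ 18) + 3/2 * h)"
      using Cp by (rule mult_left_mono)
    then show ?thesis using True u unfolding u_def by (simp add: field_simps)
  qed (use Cp B x18 in simp)
  show ?thesis using randomized deterministic
    unfolding leaf_cost_def d_def[symmetric] x_def[symmetric] \<tau>_def[symmetric]
    by (simp add: algebra_simps)
qed

definition time_const :: "real \<Rightarrow> real \<Rightarrow> real" where
  "time_const C c =
     \<bar>C + 1\<bar> + 3/2 * max C 0 + max C 0 * (2 * (3/2) ^ 18 + 3/2 * (1 + log_tau_const c))"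

lemma running_time_le:
  fixes C c \<Delta> n m :: real
  assumes c: "0 \<le> c" and \<Delta>: "4 * 2 ^ h \<le> \<Delta>" and nm: "n \<le> 2 * m" and n: "4 \<le> n"
  shows "(C + 1) * h * m + leaf_cost (max C 0) ((c + 1) * log 2 n)
                             (halve_toward 2 \<Delta> h) (halve_toward (-1) m h) * m
         \<le> time_const C c * (m * (\<Delta> / 2 ^ h) ^ 18 + m * h)"
    (is "?time \<le> _")
proof -
  define A where "A = max C 0 * (2 * (3/2) ^ 18 + 3/2 * (1 + log_tau_const c))"
  define y where "y = (\<Delta> / 2 ^ h) ^ 18"
  have m: "0 \<le> m" using n nm by linarith
  have "0 \<le> \<Delta>" using \<Delta> order.trans[of 0 "4 * 2 ^ h" \<Delta>] by simp
  then have y: "0 \<le> y" unfolding y_def by simp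
  have "(C + 1) * h * m \<le> \<bar>C + 1\<bar> * (m * h)"
    using mult_right_mono[OF abs_ge_self[of "C + 1"], of "m * h"] m by (simp add: mult_ac)
  moreover have "leaf_cost (max C 0) ((c + 1) * log 2 n) (halve_toward 2 \<Delta> h)
                   (halve_toward (-1) m h) * m \<le> (A * y + 3/2 * max C 0 * h) * m"
    using leaf_cost_le[OF _ c \<Delta> nm n, of "max C 0"] m unfolding A_def y_def
    by (intro mult_right_mono) (auto simp: algebra_simps)
  ultimately have "?time \<le> (\<bar>C + 1\<bar> + 3/2 * max C 0) * (m * h) + A * (m * y)"
    by (simp add: algebra_simps)
  also have "\<dots> \<le> time_const C c * (m * h) + time_const C c * (m * y)"
  proof -
    have "0 \<le> A" unfolding A_def log_tau_const_def by simp
    then have "\<bar>C + 1\<bar> + 3/2 * max C 0 \<le> time_const C c" "A \<le> time_const C c"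
      unfolding time_const_def A_def[symmetric] by auto
    then show ?thesis using m y by (intro add_mono mult_right_mono) auto
  qed
  finally show ?thesis unfolding y_def by (simp add: algebra_simps)
qed

lemma four_mult_two_pow_le:
  assumes "real h \<le> log 2 (real d) - 2"
  shows "4 * 2 ^ h \<le> real d"
proof -
  have "d \<noteq> 0"
  proof
    assume "d = 0"
    then show False using assms by (simp add: log_def)
  qed
  have "2 powr (real h + 2) \<le> 2 powr log 2 (real d)" using assms by (intro powr_mono) auto
  then show ?thesis using \<open>d \<noteq> 0\<close> by (simp add: powr_add powr_realpow)
qed

lemma two_pow_div_powr_le:
  fixes n :: real
  assumes "0 < n" "2 ^ h \<le> n"
  shows "2 ^ h / 2 powr ((c + 1) * log 2 n) \<le> 1 / n powr c"
proof -
  have "2 powr ((c + 1) * log 2 n) = (2 powr log 2 n) powr (c + 1)"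
    by (simp add: powr_powr mult.commute)
  also have "\<dots> = n * n powr c" using assms(1) by (simp add: powr_add)
  finally have "2 powr ((c + 1) * log 2 n) = n * n powr c" .
  moreover have "2 ^ h / (n * n powr c) \<le> n / (n * n powr c)"
    using assms by (intro divide_right_mono) auto
  ultimately show ?thesis using assms(1) by simp
qed

locale edge_coloring_subroutines =
  fixes S :: "'a set set \<Rightarrow> 'a set set \<times> 'a set set \<times> nat"
    and R :: "'a set set \<Rightarrow> (('a set \<Rightarrow> nat) \<times> nat) pmf"
    and D :: "'a set set \<Rightarrow> ('a set \<Rightarrow> nat) \<times> nat"
    and C :: real
  assumes split_spec: "\<And>H. is_graph H \<Longrightarrow>
           (case S H of (E1, E2, t) \<Rightarrow>
              degree_splitting H E1 E2 2 \<and>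
              {card E1, card E2} = {card H div 2, (card H + 1) div 2} \<and>
              real t \<le> C * real (card H))"
    and rand_spec: "\<And>H. is_graph H \<Longrightarrow>
           (\<forall>(\<phi>, t) \<in> set_pmf (R H).
              real t \<le> C * real (maxdeg H) ^ 18 * real (card (verts H))) \<and>
           measure_pmf.prob (R H) {(\<phi>, t). proper_edge_coloring H (maxdeg H + 1) \<phi>}
              \<ge> 1 - 1 / real (maxdeg H) ^ card (verts H)"
    and det_spec: "\<And>H. is_graph H \<Longrightarrow>
           proper_edge_coloring H (maxdeg H + 1) (fst (D H)) \<and>
           real (snd (D H)) \<le> C * real (card H) * real (maxdeg H) * log 2 (real (card (verts H)))"
begin

lemma edge_coloring_0_prob_good:
  fixes M Sz :: real
  assumes H: "is_graph H" and deg: "2 \<le> maxdeg H" "maxdeg H \<le> M" and size: "Sz \<le> card H"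
  shows "1 - 1 / 2 powr \<tau> \<le> measure_pmf.prob (edge_coloring S R D \<tau> H 0)
           (good_outcome H (M + 1) (leaf_cost (max C 0) \<tau> M Sz * card H))"
proof (cases "\<tau> \<le> card (verts H)")
  case True
  let ?n = "card (verts H)" and ?d = "maxdeg H"
  have "1 - 1 / 2 powr \<tau> \<le> 1 - 1 / real ?d ^ ?n"
  proof -
    have "1 / real ?d ^ ?n \<le> 1 / 2 ^ ?n" using deg by (intro divide_left_mono power_mono) auto
    also have "\<dots> \<le> 1 / 2 powr \<tau>"
      using True by (intro divide_left_mono) (auto simp: powr_realpow[symmetric])
    finally show ?thesis by simp
  qed
  also have "\<dots> \<le> measure_pmf.prob (R H) {(\<phi>, t). proper_edge_coloring H (?d + 1) \<phi>}"
    using rand_spec[OF H] by simp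
  also have "\<dots> \<le> measure_pmf.prob (map_pmf (\<lambda>(\<phi>, t). (\<phi>, ?d + 1, t)) (R H))
                   (good_outcome H (M + 1) (leaf_cost (max C 0) \<tau> M Sz * card H))"
  proof (rule prob_map_pmf_ge, clarify)
    fix \<phi> t assume proper: "proper_edge_coloring H (?d + 1) \<phi>" and "(\<phi>, t) \<in> set_pmf (R H)"
    then have "real t \<le> C * real ?d ^ 18 * real ?n" using rand_spec[OF H] by auto
    also have "\<dots> \<le> max C 0 * M ^ 18 * (2 * card H)"
      using deg card_verts_le[OF H] by (intro mult_mono power_mono) auto
    also have "\<dots> \<le> leaf_cost (max C 0) \<tau> M Sz * card H"
      using deg unfolding leaf_cost_def by (simp add: algebra_simps)
    finally show "(\<phi>, ?d + 1, t) \<in> good_outcome H (M + 1) (leaf_cost (max C 0) \<tau> M Sz * card H)"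
      using proper deg unfolding good_outcome_def by simp
  qed
  finally show ?thesis using True by simp
next
  case False
  let ?n = "card (verts H)" and ?d = "maxdeg H"
  obtain \<phi> t where Dt: "D H = (\<phi>, t)" by fastforce
  have "real (card H) \<le> real ?n ^ 2"
    using card_le_card_verts_squared[OF H] by (metis of_nat_le_iff of_nat_power)
  also have "\<dots> < \<tau>\<^sup>2" using False by (intro power_strict_mono) auto
  finally have small: "Sz < \<tau>\<^sup>2" using size by linarith
  have log_n: "0 \<le> log 2 ?n \<and> log 2 ?n \<le> max 0 (log 2 \<tau>)"
  proof (cases "?n = 0")
    case False
    then have "log 2 ?n \<le> log 2 \<tau>" using \<open>\<not> \<tau> \<le> ?n\<close> by (subst log_le_cancel_iff) auto
    then show ?thesis using False by auto
  qed (simp add: log_def)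
  have "real t \<le> C * real (card H) * real ?d * log 2 ?n" using det_spec[OF H] Dt by simp
  also have "\<dots> \<le> max C 0 * real (card H) * M * max 0 (log 2 \<tau>)"
    using deg log_n by (intro mult_mono) auto
  also have "\<dots> \<le> leaf_cost (max C 0) \<tau> M Sz * card H"
    using deg small unfolding leaf_cost_def by (simp add: algebra_simps)
  finally have "(\<phi>, ?d + 1, t) \<in> good_outcome H (M + 1) (leaf_cost (max C 0) \<tau> M Sz * card H)"
    using det_spec[OF H] Dt deg unfolding good_outcome_def by simp
  then show ?thesis using False Dt by simp
qed

(* L and M bound the maximum degree, Sz the number of edges.  The lower bound L keeps the maximum
   degree of every leaf at least 2, which is what makes the randomized failure bound 1/d^n small. *)
lemma edge_coloring_prob_good:
  fixes L M Sz :: real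
  assumes "is_graph H" "L \<le> maxdeg H" "maxdeg H \<le> M" "2 \<le> halve_toward (-2) L h" "Sz \<le> card H"
  shows "1 - 2 ^ h / 2 powr \<tau> \<le> measure_pmf.prob (edge_coloring S R D \<tau> H h)
           (good_outcome H (M + 3 * 2 ^ h - 2)
              ((C + 1) * h * card H
               + leaf_cost (max C 0) \<tau> (halve_toward 2 M h) (halve_toward (-1) Sz h) * card H))"
  using assms
proof (induction h arbitrary: H L M Sz)
  case 0
  then have "2 \<le> maxdeg H" by simp
  from edge_coloring_0_prob_good[OF 0(1) this 0(3,5)] show ?case
    by (simp del: edge_coloring.simps add: add.commute)
next
  case (Suc h)
  obtain E1 E2 t0 where split: "S H = (E1, E2, t0)" by (metis prod_cases3)
  have spl: "degree_splitting H E1 E2 2"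
    and sizes: "{card E1, card E2} = {card H div 2, (card H + 1) div 2}"
    and t0: "real t0 \<le> C * card H"
    using split_spec[OF Suc.prems(1)] split by auto
  have H: "H = E1 \<union> E2" "E1 \<inter> E2 = {}" using spl unfolding degree_splitting_def by auto
  then have card_H: "real (card H) = card E1 + card E2"
    using Suc.prems(1) unfolding is_graph_def by (simp add: card_Un_disjoint)
  define \<beta> where
    "\<beta> = leaf_cost (max C 0) \<tau> (halve_toward 2 M (Suc h)) (halve_toward (-1) Sz (Suc h))"
  have \<beta>_eq: "leaf_cost (max C 0) \<tau> (halve_toward 2 ((M + 2) / 2) h)
                  (halve_toward (-1) ((Sz - 1) / 2) h) = \<beta>"
    using halve_toward_Suc[of 2 M h] halve_toward_Suc[of "-1" Sz h] unfolding \<beta>_def by simp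
  define P where "P = (M + 2) / 2 + 3 * 2 ^ h - 2"
  define T where "T E = (C + 1) * h * card E + \<beta> * card E" for E :: "'a set set"
  have half: "1 - 2 ^ h / 2 powr \<tau>
                \<le> measure_pmf.prob (edge_coloring S R D \<tau> E h) (good_outcome E P (T E))"
    if "degree_splitting H E E' 2" "card H div 2 \<le> card E" for E E'
    unfolding P_def T_def \<beta>_eq[symmetric]
  proof (rule Suc.IH)
    show "2 \<le> halve_toward (-2) ((L - 2) / 2) h"
      using Suc.prems(4) halve_toward_Suc[of "-2" L h] by simp
  qed (use degree_splitting_half_bounds[OF Suc.prems(1) that Suc.prems(2,3,5)] in auto)
  have "card H div 2 \<le> card E1" "card H div 2 \<le> card E2"
    using sizes by (auto simp: doubleton_eq_iff)
  note half1 = half[OF spl this(1)] and half2 = half[OF degree_splitting_commute[OF spl] this(2)]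
  have "1 - 2 ^ Suc h / 2 powr \<tau> = (1 - 2 ^ h / 2 powr \<tau>) + (1 - 2 ^ h / 2 powr \<tau>) - 1" by simp
  also have "\<dots> \<le> measure_pmf.prob (edge_coloring S R D \<tau> E1 h) (good_outcome E1 P (T E1))
                 + measure_pmf.prob (edge_coloring S R D \<tau> E2 h) (good_outcome E2 P (T E2)) - 1"
    using half1 half2 by linarith
  also have "\<dots> \<le> measure_pmf.prob (edge_coloring S R D \<tau> H (Suc h))
      (good_outcome H (M + 3 * 2 ^ Suc h - 2) ((C + 1) * Suc h * card H + \<beta> * card H))"
    unfolding edge_coloring_Suc_eq[where S = S and H = H, OF split]
  proof (rule prob_map_pair_pmf_ge, clarify)
    fix \<phi>1 p1 t1 \<phi>2 p2 t2
    assume "(\<phi>1, p1, t1) \<in> good_outcome E1 P (T E1)" "(\<phi>2, p2, t2) \<in> good_outcome E2 P (T E2)"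
    from good_outcome_Un[OF this, of "t0 + card H"]
    have "(\<lambda>e. if e \<in> E1 then \<phi>1 e else p1 + \<phi>2 e, p1 + p2, t0 + card H + t1 + t2)
            \<in> good_outcome H (M + 3 * 2 ^ Suc h - 2) (real (t0 + card H) + T E1 + T E2)"
      unfolding H(1)[symmetric] P_def by (simp add: algebra_simps)
    moreover have "real (t0 + card H) + T E1 + T E2 \<le> (C + 1) * Suc h * card H + \<beta> * card H"
      using t0 card_H unfolding T_def by (simp add: algebra_simps)
    ultimately show "(\<lambda>e. if e \<in> E1 then \<phi>1 e else p1 + \<phi>2 e, p1 + p2, t0 + card H + t1 + t2)
            \<in> good_outcome H (M + 3 * 2 ^ Suc h - 2) ((C + 1) * Suc h * card H + \<beta> * card H)"
      using good_outcome_mono[OF order_refl] by blast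
  qed
  finally show ?case unfolding \<beta>_def .
qed

lemma edge_coloring_success_prob:
  fixes c :: real
  assumes c: "0 \<le> c" and E: "is_graph E" and h: "real h \<le> log 2 (real (maxdeg E)) - 2"
  shows "1 - 1 / real (card (verts E)) powr c
           \<le> measure_pmf.prob (edge_coloring S R D ((c + 1) * log 2 (real (card (verts E)))) E h)
               {(\<phi>, p, t). proper_edge_coloring E (maxdeg E + 3 * 2 ^ h) \<phi> \<and>
                  real t \<le> time_const C c * (real (card E) * (real (maxdeg E) / 2 ^ h) ^ 18
                                              + real (card E) * real h)}"
proof -
  let ?n = "card (verts E)" and ?m = "card E" and ?\<Delta> = "maxdeg E"
  let ?\<tau> = "(c + 1) * log 2 (real ?n)"
  have \<Delta>: "4 * 2 ^ h \<le> real ?\<Delta>" using h by (rule four_mult_two_pow_le)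
  have "(1 :: real) \<le> 2 ^ h" by simp
  moreover have "real ?\<Delta> \<le> real ?n" using maxdeg_le_card_verts[OF E] by simp
  ultimately have n: "4 \<le> real ?n" "2 ^ h \<le> real ?n" using \<Delta> by linarith+
  have nm: "real ?n \<le> 2 * real ?m" using card_verts_le[OF E] by simp
  have "1 - 1 / real ?n powr c \<le> 1 - 2 ^ h / 2 powr ?\<tau>"
    using two_pow_div_powr_le[of "real ?n" h c] n by simp
  also have "\<dots> \<le> measure_pmf.prob (edge_coloring S R D ?\<tau> E h)
      (good_outcome E (real ?\<Delta> + 3 * 2 ^ h - 2)
         ((C + 1) * h * ?m
          + leaf_cost (max C 0) ?\<tau> (halve_toward 2 ?\<Delta> h) (halve_toward (-1) ?m h) * ?m))"
    using \<Delta> by (intro edge_coloring_prob_good[OF E order_refl order_refl _ order_refl])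
      (simp add: halve_toward_def field_simps)
  also have "\<dots> \<le> measure_pmf.prob (edge_coloring S R D ?\<tau> E h)
      {(\<phi>, p, t). proper_edge_coloring E (?\<Delta> + 3 * 2 ^ h) \<phi> \<and>
         real t \<le> time_const C c * (real ?m * (real ?\<Delta> / 2 ^ h) ^ 18 + real ?m * real h)}"
    using running_time_le[OF c \<Delta> nm n(1)]
    by (intro measure_pmf.finite_measure_mono good_outcome_subset_proper) auto
  finally show ?thesis .
qed

end

theorem corollary3p10:
  fixes c C :: real
    and S :: "'a set set \<Rightarrow> 'a set set \<times> 'a set set \<times> nat"
    and R :: "'a set set \<Rightarrow> (('a set \<Rightarrow> nat) \<times> nat) pmf"
    and D :: "'a set set \<Rightarrow> ('a set \<Rightarrow> nat) \<times> nat"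
  assumes c_pos: "c > 0"
    and split_spec: "\<And>H. is_graph H \<Longrightarrow>
           (case S H of (E1, E2, t) \<Rightarrow>
              degree_splitting H E1 E2 2 \<and>
              {card E1, card E2} = {card H div 2, (card H + 1) div 2} \<and>
              real t \<le> C * real (card H))"
    and rand_spec: "\<And>H. is_graph H \<Longrightarrow>
           (\<forall>(\<phi>, t) \<in> set_pmf (R H).
              real t \<le> C * real (maxdeg H) ^ 18 * real (card (verts H))) \<and>
           measure_pmf.prob (R H) {(\<phi>, t). proper_edge_coloring H (maxdeg H + 1) \<phi>}
              \<ge> 1 - 1 / real (maxdeg H) ^ card (verts H)"
    and det_spec: "\<And>H. is_graph H \<Longrightarrow>
           proper_edge_coloring H (maxdeg H + 1) (fst (D H)) \<and>
           real (snd (D H)) \<le> C * real (card H) * real (maxdeg H) * log 2 (real (card (verts H)))"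
  shows "\<exists>K. \<forall>(E :: 'a set set) (h :: nat). is_graph E \<longrightarrow>
           log 2 (real (maxdeg E) * log 2 (log 2 (real (card (verts E))))
                  / (4 * log 2 (real (card (verts E))))) \<le> real h \<longrightarrow>
           real h \<le> log 2 (real (maxdeg E)) - 2 \<longrightarrow>
           measure_pmf.prob
             (edge_coloring S R D ((c + 1) * log 2 (real (card (verts E)))) E h)
             {(\<phi>, p, t). proper_edge_coloring E (maxdeg E + 3 * 2 ^ h) \<phi> \<and>
                real t \<le> K * (real (card E) * (real (maxdeg E) / 2 ^ h) ^ 18
                               + real (card E) * real h)}
           \<ge> 1 - 1 / real (card (verts E)) powr c"
proof -
  interpret edge_coloring_subroutines S R D C
    by unfold_locales (fact split_spec rand_spec det_spec)+
  show ?thesis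
    using c_pos by (intro exI[of _ "time_const C c"] allI impI edge_coloring_success_prob) auto
qed

end
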